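(* For every nonnegative integer $n$, $$\sum_{k=0}^{\infty}(-1)^k(4k+1)\,\frac{(-3n)_k\,(-n+\tfrac13)_k\,(\tfrac12)_k}{k!\,(n+\tfrac76)_k\,(3n+\tfrac32)_k}=\left(\frac{3^3}{2^8}\right)^n\frac{(\tfrac56)_n(\tfrac12)_n(\tfrac76)_n^2}{(\tfrac{25}{24})_n(\tfrac{7}{24})_n(\tfrac{13}{24})_n(\tfrac{19}{24})_n}.$$ (The sum is finite, since $(-3n)_k=0$ for $k>3n$.)
   Context: $(a)_j=\Gamma(a+j)/\Gamma(a)=a(a+1)\cdots(a+j-1)$ denotes the rising factorial (Pochhammer symbol), with $(a)_0=1$. *)

theory Defs
  imports "HOL-Analysis.Analysis"
begin

end

theory Submission
  imports Defs
begin

(* Proof by creative telescoping (Zeilberger's method) in the parameter n.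

   Write F(x,k) for the k-th summand with n replaced by a real parameter x >= 0, and
   H(x,k) for the companion hypergeometric term in which the numerator parameters
   -3x and -x+1/3 are lowered to -3x-3 and -x-2/3.  By the shift rule for Pochhammer
   symbols, F(x,k), F(x+1,k) and H(x,k+1) are all explicit rational multiples of H(x,k).
   With the certificate G(x,k) = H(x,k) * R(x,k), where R involves an explicit polynomial
   found by Zeilberger's algorithm, one checks the telescoping relation
       lead(x) F(x+1,k) - trail(x) F(x,k) = G(x,k+1) - G(x,k)
   by a single polynomial identity.  For x = n the series is a finite sum (F vanishes for
   k > 3n, G for k > 3n+3, and G(x,0) = 0), so summing over k gives the recurrence
   lead(n) S(n+1) = trail(n) S(n).  The right-hand side obeys the same first-order
   recurrence, both sides equal 1 at n = 0, and induction on n finishes the proof. *)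

(* Both sides equal pochhammer a (m + k): shifting the base by m costs a factor of
   length m at the start, or equivalently at the end, of the product. *)
lemma pochhammer_shift:
  "pochhammer a m * pochhammer (a + of_nat m) k = pochhammer a k * pochhammer (a + of_nat k) m"
  by (metis add.commute pochhammer_product')

lemma pochhammer_3: "pochhammer a 3 = a * (a + 1) * (a + 2)"
  by (simp add: numeral_3_eq_3 pochhammer_Suc add.assoc)

lemma pochhammer_shift_1:
  fixes a :: "'a :: comm_semiring_1"
  shows "a * pochhammer (a + 1) k = (a + of_nat k) * pochhammer a k"
  using pochhammer_shift[of a 1 k] by (simp add: mult.commute)

lemma pochhammer_shift_3:
  fixes a :: "'a :: comm_semiring_1"
  shows "a * (a + 1) * (a + 2) * pochhammer (a + 3) k
       = (a + of_nat k) * (a + of_nat k + 1) * (a + of_nat k + 2) * pochhammer a k"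
  using pochhammer_shift[of a 3 k] by (simp add: pochhammer_3 mult.commute)

definition summand :: "real \<Rightarrow> nat \<Rightarrow> real" where
  "summand x k = (-1) ^ k * (4 * real k + 1) *
     (pochhammer (- 3 * x) k * pochhammer (- x + 1/3) k * pochhammer (1/2) k)
     / (fact k * pochhammer (x + 7/6) k * pochhammer (3 * x + 3/2) k)"

(* The companion term H(x,k): the numerator parameters -3x and -x+1/3 of F(x,k) are
   replaced by -3x-3 and -x-2/3, those of F(x+1,k).  Every term of the telescoping
   relation is a rational multiple of H(x,k). *)
definition base_term :: "real \<Rightarrow> nat \<Rightarrow> real" where
  "base_term x k = (-1) ^ k *
     (pochhammer (- 3 * x - 3) k * pochhammer (- x - 2/3) k * pochhammer (1/2) k)
     / (fact k * pochhammer (x + 7/6) k * pochhammer (3 * x + 3/2) k)"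

lemma denominator_pochhammers_nonzero:
  fixes x :: real
  assumes "x \<ge> 0"
  shows "pochhammer (x + 7/6) k \<noteq> 0" "pochhammer (3 * x + 3/2) k \<noteq> 0"
  using assms by (auto intro!: pochhammer_pos[THEN less_imp_neq, THEN not_sym])

(* F(x,k) as a rational multiple of H(x,k): shift -3x-3 up by 3 and -x-2/3 up by 1. *)
lemma summand_eq_base:
  fixes x :: real
  assumes "x \<ge> 0"
  shows "summand x k = base_term x k
    * ((4*real k+1)*(3*x+3-real k)*(3*x+2-real k)*(3*x+1-real k)*(3*x+2-3*real k))
    / ((3*x+1)*(3*x+2)^2*(3*x+3))"
proof -
  have "- ((3*x+3)*(3*x+2)*(3*x+1)) * pochhammer (- 3 * x) k
      = - ((3*x+3-real k)*(3*x+2-real k)*(3*x+1-real k)) * pochhammer (- 3 * x - 3) k"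
    using pochhammer_shift_3[of "- 3 * x - 3" k] by (simp add: algebra_simps)
  then have lower3: "(3*x+3)*(3*x+2)*(3*x+1) * pochhammer (- 3 * x) k
      = (3*x+3-real k)*(3*x+2-real k)*(3*x+1-real k) * pochhammer (- 3 * x - 3) k"
    by simp
  have "-3 * ((- x - 2/3) * pochhammer (- x + 1/3) k)
      = -3 * ((- x - 2/3 + real k) * pochhammer (- x - 2/3) k)"
    using pochhammer_shift_1[of "- x - 2/3" k] by simp
  then have lower1: "(3*x+2) * pochhammer (- x + 1/3) k
      = (3*x+2-3*real k) * pochhammer (- x - 2/3) k"
    by (simp add: algebra_simps)
  define den where "den = fact k * pochhammer (x + 7/6) k * pochhammer (3 * x + 3/2) k"
  have "summand x k * ((3*x+1)*(3*x+2)^2*(3*x+3)) = (-1) ^ k * (4 * real k + 1) *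
     (((3*x+3)*(3*x+2)*(3*x+1) * pochhammer (- 3 * x) k) * ((3*x+2) * pochhammer (- x + 1/3) k)
      * pochhammer (1/2) k) / den"
    unfolding summand_def den_def by (simp add: power2_eq_square mult_ac)
  also have "\<dots> = (-1) ^ k * (4 * real k + 1) *
     (((3*x+3-real k)*(3*x+2-real k)*(3*x+1-real k) * pochhammer (- 3 * x - 3) k)
      * ((3*x+2-3*real k) * pochhammer (- x - 2/3) k) * pochhammer (1/2) k) / den"
    unfolding lower3 lower1 ..
  also have "\<dots> = base_term x k
    * ((4*real k+1)*(3*x+3-real k)*(3*x+2-real k)*(3*x+1-real k)*(3*x+2-3*real k))"
    unfolding base_term_def den_def by (simp add: mult_ac)
  finally show ?thesis
    using assms by (simp add: eq_divide_eq)
qed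

(* F(x+1,k) as a rational multiple of H(x,k): the numerators of F(x+1,k) and H(x,k)
   coincide, and the denominator parameters x+13/6 and 3x+9/2 are shifted down. *)
lemma summand_succ_eq_base:
  fixes x :: real
  assumes x: "x \<ge> 0"
  shows "summand (x + 1) k = base_term x k * ((4*real k+1)*(6*x+7)^2*(6*x+3)*(6*x+5))
    / ((6*x+6*real k+7)*(6*x+2*real k+3)*(6*x+2*real k+5)*(6*x+2*real k+7))"
proof -
  define u0 where "u0 = pochhammer (x + 7/6) k"
  define v0 where "v0 = pochhammer (3 * x + 3/2) k"
  define u1 where "u1 = pochhammer (x + 1 + 7/6) k"
  define v1 where "v1 = pochhammer (3 * (x + 1) + 3/2) k"
  define num where
    "num = pochhammer (- 3 * x - 3) k * pochhammer (- x - 2/3) k * pochhammer (1/2::real) k"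
  define w where "w = 6*x+7"
  define a where "a = 6*x+6*real k+7"
  define c where "c = (6*x+3)*(6*x+5)*(6*x+7)"
  define d where "d = (6*x+2*real k+3)*(6*x+2*real k+5)*(6*x+2*real k+7)"
  have "6 * ((x + 7/6) * u1) = 6 * ((x + 7/6 + real k) * u0)"
    using pochhammer_shift_1[of "x + 7/6" k] unfolding u0_def u1_def by (simp add: add_ac)
  then have "w * u1 = a * u0"
    unfolding w_def a_def by (simp add: algebra_simps)
  moreover have "w \<noteq> 0"
    unfolding w_def using x by simp
  ultimately have u1: "u1 = a * u0 / w"
    by (simp add: eq_divide_eq mult.commute)
  have "8 * ((3*x+3/2)*(3*x+5/2)*(3*x+7/2) * v1)
      = 8 * ((3*x+3/2+real k)*(3*x+5/2+real k)*(3*x+7/2+real k) * v0)"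
    using pochhammer_shift_3[of "3 * x + 3/2" k] unfolding v0_def v1_def by (simp add: add_ac)
  then have "c * v1 = d * v0"
    unfolding c_def d_def by (simp add: algebra_simps)
  moreover have "c \<noteq> 0"
    unfolding c_def using x by simp
  ultimately have v1: "v1 = d * v0 / c"
    by (simp add: eq_divide_eq mult.commute)
  have "- 3 * (x + 1) = - 3 * x - 3" "- (x + 1) + 1/3 = - x - 2/3"
    by simp_all
  then have summand: "summand (x + 1) k = (-1)^k * (4*real k+1) * num / (fact k * u1 * v1)"
    unfolding summand_def num_def u1_def v1_def by (simp only:)
  have base: "base_term x k = (-1)^k * num / (fact k * u0 * v0)"
    unfolding base_term_def num_def u0_def v0_def ..
  have "u0 \<noteq> 0" "v0 \<noteq> 0" "d \<noteq> 0" "c \<noteq> 0" "a \<noteq> 0" "w \<noteq> 0"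
    unfolding u0_def v0_def c_def d_def a_def w_def
    using denominator_pochhammers_nonzero[OF x] x by auto
  then have "summand (x + 1) k = base_term x k * ((4*real k+1) * c * w) / (a * d)"
    unfolding summand base u1 v1 by (simp add: field_simps)
  then show ?thesis
    unfolding a_def c_def d_def w_def by (simp add: power2_eq_square mult_ac)
qed

lemma base_term_Suc:
  fixes x :: real
  assumes x: "x \<ge> 0"
  shows "base_term x (Suc k) = base_term x k * (-2*((real k-3*x-3)*(3*real k-3*x-2)*(2*real k+1)))
    / ((real k+1)*(6*x+6*real k+7)*(6*x+2*real k+3))"
proof -
  define num where
    "num = pochhammer (- 3 * x - 3) k * pochhammer (- x - 2/3) k * pochhammer (1/2::real) k"
  define den where "den = fact k * pochhammer (x + 7/6) k * pochhammer (3 * x + 3/2) k"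
  have "base_term x (Suc k)
      = (-1)^k * num * (- ((- 3*x - 3 + real k) * (- x - 2/3 + real k) * (1/2 + real k)))
      / (den * ((real k + 1) * (x + 7/6 + real k) * (3*x + 3/2 + real k)))"
    unfolding base_term_def pochhammer_Suc fact_Suc num_def den_def by (simp add: mult_ac)
  also have "\<dots> = base_term x k
      * (- ((- 3*x - 3 + real k) * (- x - 2/3 + real k) * (1/2 + real k))
      / ((real k + 1) * (x + 7/6 + real k) * (3*x + 3/2 + real k)))"
    unfolding base_term_def num_def den_def by (simp only: times_divide_times_eq)
  also have "\<dots> = base_term x k * (-2*((real k-3*x-3)*(3*real k-3*x-2)*(2*real k+1)))
    / ((real k+1)*(6*x+6*real k+7)*(6*x+2*real k+3))"
  proof -
    have nz: "(real k + 1) * (x + 7/6 + real k) * (3*x + 3/2 + real k) \<noteq> 0"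
      "(real k+1)*(6*x+6*real k+7)*(6*x+2*real k+3) \<noteq> 0"
      using x by (simp_all add: add_nonneg_pos)
    have "- ((- 3*x - 3 + real k) * (- x - 2/3 + real k) * (1/2 + real k))
        / ((real k + 1) * (x + 7/6 + real k) * (3*x + 3/2 + real k))
      = -2*((real k-3*x-3)*(3*real k-3*x-2)*(2*real k+1))
        / ((real k+1)*(6*x+6*real k+7)*(6*x+2*real k+3))"
      unfolding frac_eq_eq[OF nz] by algebra
    then show ?thesis
      by (simp only: times_divide_eq_right)
  qed
  finally show ?thesis .
qed

definition cert_poly :: "real \<Rightarrow> real \<Rightarrow> real" where
  "cert_poly x k =
     - 8265320 - 2984835 * k + 5502210 * k ^ 2 + 1849995 * k ^ 3 - 1750770 * k ^ 4
     - 238140 * k ^ 5 + 158760 * k ^ 6 - 141674764 * x - 35840742 * x * k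
     + 67981872 * x * k ^ 2 + 14700924 * x * k ^ 3 - 14213304 * x * k ^ 4
     - 1170288 * x * k ^ 5 + 780192 * x * k ^ 6 - 1060759596 * x ^ 2 - 186177258 * x ^ 2 * k
     + 360202734 * x ^ 2 * k ^ 2 + 48436056 * x ^ 2 * k ^ 3 - 47580696 * x ^ 2 * k ^ 4
     - 2052864 * x ^ 2 * k ^ 5 + 1368576 * x ^ 2 * k ^ 6 - 4577606478 * x ^ 3
     - 545020056 * x ^ 3 * k + 1068882264 * x ^ 3 * k ^ 2 + 84503088 * x ^ 3 * k ^ 3
     - 83861568 * x ^ 3 * k ^ 4 - 1539648 * x ^ 3 * k ^ 5 + 1026432 * x ^ 3 * k ^ 6
     - 12630619980 * x ^ 4 - 981710604 * x ^ 4 * k + 1942923672 * x ^ 4 * k ^ 2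
     + 81955152 * x ^ 4 * k ^ 3 - 81780192 * x ^ 4 * k ^ 4 - 419904 * x ^ 4 * k ^ 5
     + 279936 * x ^ 4 * k ^ 6 - 23319303840 * x ^ 5 - 1112905008 * x ^ 5 * k
     + 2215382400 * x ^ 5 * k ^ 2 + 41710464 * x ^ 5 * k ^ 3 - 41710464 * x ^ 5 * k ^ 4
     - 29214601128 * x ^ 6 - 774839520 * x ^ 6 * k + 1547509536 * x ^ 6 * k ^ 2
     + 8678016 * x ^ 6 * k ^ 3 - 8678016 * x ^ 6 * k ^ 4 - 24553746432 * x ^ 7
     - 302750784 * x ^ 7 * k + 605501568 * x ^ 7 * k ^ 2 - 13264067520 * x ^ 8
     - 50808384 * x ^ 8 * k + 101616768 * x ^ 8 * k ^ 2 - 4162928256 * x ^ 9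
     - 576948096 * x ^ 10"

(* The certificate G(x,k); it vanishes at k = 0 because of the factor k. *)
definition certificate :: "real \<Rightarrow> nat \<Rightarrow> real" where
  "certificate x k = base_term x k * (4 * real k * cert_poly x (real k)
     / (442368 * ((3*x+1)*(3*x+2)^2*(3*x+3)) * ((6*x+2*real k+3)*(6*x+2*real k+5))))"

definition rec_lead :: "real \<Rightarrow> real" where
  "rec_lead x = (x + 25/24) * (x + 7/24) * (x + 13/24) * (x + 19/24)"

definition rec_trail :: "real \<Rightarrow> real" where
  "rec_trail x = 27/256 * (x + 5/6) * (x + 1/2) * (x + 7/6)^2"

(* The polynomial identity behind the telescoping relation, after clearing all
   denominators (with k a real variable). *)
lemma certificate_identity:
  fixes x k :: real
  shows "((3*x+1)*(3*x+2)^2*(3*x+3)) * ((24*x+25)*(24*x+7)*(24*x+13)*(24*x+19))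
      * ((4*k+1)*(6*x+7)^2*(6*x+3)*(6*x+5))
    - 81 * ((6*x+5)*(2*x+1)*(6*x+7)^2) * ((4*k+1)*(3*x+3-k)*(3*x+2-k)*(3*x+1-k)*(3*x+2-3*k))
      * ((6*x+6*k+7)*(6*x+2*k+3)*(6*x+2*k+5)*(6*x+2*k+7))
   = -6 * ((k-3*x-3)*(3*k-3*x-2)*(2*k+1)) * cert_poly x (k+1)
     - 3 * k * cert_poly x k * ((6*x+6*k+7)*(6*x+2*k+7))"
  unfolding cert_poly_def by algebra

(* Field bookkeeping: with every term written as a multiple of h = H(x,k) and the factor
   m = k+1 cancelling between H(x,k+1) and G(x,k+1), the polynomial identity yields the
   telescoping relation.  Kept abstract so that the field simplifier works on atoms. *)
lemma telescoping_algebra: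
  fixes h A B N0 N1 D a1 a2 a3 a4 r p0 p1 k m :: real
  assumes nz: "D \<noteq> 0" "a1 \<noteq> 0" "a2 \<noteq> 0" "a3 \<noteq> 0" "a4 \<noteq> 0" "m \<noteq> 0"
    and identity: "D*A*N1 - 81*B*N0*(a1*a2*a3*a4) = -6*r*p1 - 3*k*p0*(a1*a4)"
  shows "A/331776 * (h*N1/(a1*a2*a3*a4)) - 27*B/110592 * (h*N0/D)
    = h*(-2*r)/(m*a1*a2) * (4*m*p1/(442368*D*(a3*a4))) - h*(4*k*p0/(442368*D*(a2*a3)))"
proof -
  have "A/331776 * (h*N1/(a1*a2*a3*a4)) - 27*B/110592 * (h*N0/D)
      = h * (4 * (D*A*N1 - 81*B*N0*(a1*a2*a3*a4))) / (3*442368*D*(a1*a2*a3*a4))"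
    using nz by (simp add: field_simps)
  also have "\<dots> = h * (4 * (-6*r*p1 - 3*k*p0*(a1*a4))) / (3*442368*D*(a1*a2*a3*a4))"
    unfolding identity ..
  also have "\<dots> = h*(-2*r)/(m*a1*a2) * (4*m*p1/(442368*D*(a3*a4)))
      - h*(4*k*p0/(442368*D*(a2*a3)))"
    using nz by (simp add: field_simps)
  finally show ?thesis .
qed

lemma creative_telescoping:
  fixes x :: real
  assumes x: "x \<ge> 0"
  shows "rec_lead x * summand (x + 1) k - rec_trail x * summand x k
       = certificate x (Suc k) - certificate x k"
proof -
  have lead: "rec_lead x = (24*x+25)*(24*x+7)*(24*x+13)*(24*x+19) / 331776"
    unfolding rec_lead_def by (simp add: field_simps)
  have trail: "rec_trail x = 27 * ((6*x+5)*(2*x+1)*(6*x+7)^2) / 110592"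
    unfolding rec_trail_def by (simp add: field_simps power2_eq_square)
  have certificate_Suc: "certificate x (Suc k)
      = base_term x (Suc k) * (4 * (real k + 1) * cert_poly x (real k + 1)
        / (442368 * ((3*x+1)*(3*x+2)^2*(3*x+3)) * ((6*x+2*real k+5)*(6*x+2*real k+7))))"
    unfolding certificate_def by (simp add: algebra_simps)
  have nz: "(3*x+1)*(3*x+2)^2*(3*x+3) \<noteq> 0" "6*x+6*real k+7 \<noteq> 0" "6*x+2*real k+3 \<noteq> 0"
    "6*x+2*real k+5 \<noteq> 0" "6*x+2*real k+7 \<noteq> 0" "real k + 1 \<noteq> 0"
    using x by (simp_all add: add_nonneg_pos)
  show ?thesis
    unfolding lead trail certificate_Suc certificate_def[of x k] base_term_Suc[OF x]
      summand_eq_base[OF x] summand_succ_eq_base[OF x]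
    by (rule telescoping_algebra[OF nz certificate_identity])
qed

definition rhs :: "nat \<Rightarrow> real" where
  "rhs n = (3^3 / 2^8) ^ n *
     (pochhammer (5/6) n * pochhammer (1/2) n * (pochhammer (7/6) n)^2)
     / (pochhammer (25/24) n * pochhammer (7/24) n * pochhammer (13/24) n * pochhammer (19/24) n)"

lemma rec_lead_pos: "x \<ge> 0 \<Longrightarrow> rec_lead x > 0"
  unfolding rec_lead_def by (simp add: add_nonneg_pos)

lemma rhs_Suc: "rhs (Suc n) = rhs n * (rec_trail (real n) / rec_lead (real n))"
  unfolding rhs_def rec_trail_def rec_lead_def pochhammer_Suc power_Suc
  by (simp add: times_divide_times_eq power_mult_distrib ac_simps)

lemma summand_vanishes:
  assumes "3 * n < k"
  shows "summand (real n) k = 0"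
proof -
  have "pochhammer (- of_nat (3 * n)) k = (0 :: real)"
    using assms by (rule pochhammer_of_nat_eq_0_lemma)
  then show ?thesis
    unfolding summand_def by simp
qed

lemma certificate_vanishes:
  assumes "3 * n + 3 < k"
  shows "certificate (real n) k = 0"
proof -
  have "pochhammer (- of_nat (3 * n + 3)) k = (0 :: real)"
    using assms by (rule pochhammer_of_nat_eq_0_lemma)
  moreover have "- of_nat (3 * n + 3) = - 3 * real n - 3"
    by simp
  ultimately show ?thesis
    unfolding certificate_def base_term_def by simp
qed

lemma summand_sums_partial:
  "3 * n < K \<Longrightarrow> summand (real n) sums (\<Sum>k<K. summand (real n) k)"
  by (rule sums_finite) (auto intro: summand_vanishes)

(* Summing the telescoping relation over k < 3n+5, where the boundary terms vanish,
   shows that the sums also satisfy the recurrence. *)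
lemma partial_sum_recurrence:
  fixes n :: nat
  defines "K \<equiv> 3 * n + 5"
  shows "rec_lead (real n) * (\<Sum>k<K. summand (real n + 1) k)
       = rec_trail (real n) * (\<Sum>k<K. summand (real n) k)"
proof -
  have "rec_lead (real n) * (\<Sum>k<K. summand (real n + 1) k)
      - rec_trail (real n) * (\<Sum>k<K. summand (real n) k)
      = (\<Sum>k<K. rec_lead (real n) * summand (real n + 1) k
                 - rec_trail (real n) * summand (real n) k)"
    by (simp add: sum_distrib_left sum_subtractf)
  also have "\<dots> = (\<Sum>k<K. certificate (real n) (Suc k) - certificate (real n) k)"
    by (rule sum.cong) (simp_all add: creative_telescoping)
  also have "\<dots> = certificate (real n) K - certificate (real n) 0"
    by (rule sum_lessThan_telescope)
  also have "\<dots> = 0"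
    using certificate_vanishes[of n K] unfolding K_def by (simp add: certificate_def)
  finally show ?thesis by simp
qed

lemma summand_sums_rhs: "summand (real n) sums rhs n"
proof (induction n)
  case 0
  have "summand (real 0) sums (\<Sum>k<1. summand (real 0) k)"
    by (rule summand_sums_partial) simp
  then show ?case
    by (simp add: summand_def[of _ 0] rhs_def)
next
  case (Suc n)
  define K where "K = 3 * n + 5"
  have sum_n: "(\<Sum>k<K. summand (real n) k) = rhs n"
    using sums_unique2[OF summand_sums_partial Suc.IH] unfolding K_def by simp
  have "summand (real (Suc n)) sums (\<Sum>k<K. summand (real n + 1) k)"
    using summand_sums_partial[of "Suc n" K] unfolding K_def by (simp add: add.commute)
  moreover have "(\<Sum>k<K. summand (real n + 1) k) = rhs (Suc n)"
    using partial_sum_recurrence[of n] rec_lead_pos[of "real n"]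
    unfolding K_def[symmetric] sum_n rhs_Suc by (simp add: field_simps)
  ultimately show ?case by simp
qed

theorem theorem5:
  fixes n :: nat
  shows "(\<lambda>k. (-1) ^ k * (4 * real k + 1) *
            (pochhammer (- 3 * real n) k * pochhammer (- real n + 1/3) k * pochhammer (1/2) k)
            / (fact k * pochhammer (real n + 7/6) k * pochhammer (3 * real n + 3/2) k))
         sums ((3^3 / 2^8) ^ n *
            (pochhammer (5/6) n * pochhammer (1/2) n * (pochhammer (7/6) n)^2)
            / (pochhammer (25/24) n * pochhammer (7/24) n * pochhammer (13/24) n * pochhammer (19/24) n))"
  using summand_sums_rhs[of n] unfolding summand_def rhs_def .

end
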